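(* Let $\Gamma$ be an oriented hypergraph with $A\neq\mathbf 0$ and strong coloring number $\chi=\chi(\Gamma)$, and suppose $\chi=\dfrac{\lambda_N-\lambda_1}{\lambda_N-1}$. Let $h$ be any eigenfunction of $L$ with eigenvalue $\lambda_1$, and let $V_1,\dots,V_\chi$ be the color classes of any proper strong $\chi$-coloring. Then: (1) $\operatorname{supp}(h)\cap V_i\neq\varnothing$ for all $1\le i\le\chi$; (2) $S^h_{ij}\ge 0$ for all $1\le i<j\le\chi$; (3) for all $1\le i<j\le\chi$, $\mathrm{RQ}(h_{ij})=\lambda_N=\dfrac{\chi-\lambda_1}{\chi-1}$, and $h_{ij}$ is an eigenfunction of $L$ with eigenvalue $\lambda_N$. Consequently the multiplicity $m_\Gamma(\lambda_N)$ of $\lambda_N=(\chi-\lambda_1)/(\chi-1)$ is at least $\chi-1$, and this inequality is strict if $m_\Gamma(\lambda_1)>1$.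
   Context: An oriented hypergraph $\Gamma=(V,E,\varphi)$ consists of a finite vertex set $V$ with $|V|=N$, an edge set $E\subseteq\mathcal P(V)$, and a function $\varphi\colon V\times E\to\{-1,0,1\}$ with $\varphi(v,e)\neq 0$ iff $v\in e$. Two vertices $v,w\in e$ are co-oriented in $e$ if $\varphi(v,e)=\varphi(w,e)$ and anti-oriented in $e$ if $\varphi(v,e)=-\varphi(w,e)$. The degree is $\deg v=|\{e\in E: v\in e\}|$; we assume every vertex has degree at least $1$, and $D=\mathrm{diag}(\deg v)_{v\in V}$. The adjacency matrix $A$ is the $N\times N$ matrix with $A_{v,v}=0$ and, for $v\neq w$, $A_{v,w}=(\#\text{edges in which } v,w \text{ are anti-oriented})-(\#\text{edges in which } v,w \text{ are co-oriented})$. The normalized Laplacian is $L=\mathrm{Id}-D^{-1}A$; it is self-adjoint for $\langle f,g\rangle=\sum_{v}\deg v\, f(v)g(v)$ on functions $V\to\mathbb R$, with (real) eigenvalues $\lambda_1\le\dots\le\lambda_N$; $m_\Gamma(\lambda)$ denotes the multiplicity of $\lambda$. The Rayleigh quotient of $f\neq0$ is $\mathrm{RQ}(f)=\langle Lf,f\rangle/\langle f,f\rangle$. A proper strong $k$-coloring is a map $V\to\{1,\dots,k\}$ such that any two distinct vertices in a common edge receive different colors; $\chi(\Gamma)$ is the least such $k$. For a function $h\colon V\to\mathbb R$ and color classes $V_1,\dots,V_\chi$, define $S^h_{ij}=\sum_{v\in V_i,\,w\in V_j}A_{v,w}h(v)h(w)$, and define $h_{ij}\colon V\to\mathbb R$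 by $h_{ij}(v)=h(v)$ if $v\in V_i$, $h_{ij}(v)=-h(v)$ if $v\in V_j$, and $h_{ij}(v)=0$ otherwise. *)

theory Defs
  imports "HOL-Analysis.Analysis"
begin

text \<open>Oriented hypergraph on the finite vertex type 'v (vertex set V = UNIV),
  edge set E, incidence function phi : V x E -> {-1,0,1}.\<close>

definition oriented_hypergraph :: "'v::finite set set \<Rightarrow> ('v \<Rightarrow> 'v set \<Rightarrow> int) \<Rightarrow> bool" where
  "oriented_hypergraph E \<phi> \<longleftrightarrow>
     (\<forall>v. \<forall>e\<in>E. \<phi> v e \<in> {-1, 0, 1}) \<and> (\<forall>v. \<forall>e\<in>E. \<phi> v e \<noteq> 0 \<longleftrightarrow> v \<in> e)"

definition hdeg :: "'v set set \<Rightarrow> 'v \<Rightarrow> nat" where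
  "hdeg E v = card {e \<in> E. v \<in> e}"

definition hadj :: "'v set set \<Rightarrow> ('v \<Rightarrow> 'v set \<Rightarrow> int) \<Rightarrow> 'v \<Rightarrow> 'v \<Rightarrow> real" where
  "hadj E \<phi> v w = (if v = w then 0 else
      real (card {e \<in> E. v \<in> e \<and> w \<in> e \<and> \<phi> v e = - \<phi> w e})
    - real (card {e \<in> E. v \<in> e \<and> w \<in> e \<and> \<phi> v e = \<phi> w e}))"

definition hlap :: "'v::finite set set \<Rightarrow> ('v \<Rightarrow> 'v set \<Rightarrow> int) \<Rightarrow> real ^ 'v \<Rightarrow> real ^ 'v" where
  "hlap E \<phi> f = (\<chi> v. f $ v - (\<Sum>w\<in>UNIV. hadj E \<phi> v w * f $ w) / real (hdeg E v))"

definition hinner :: "'v::finite set set \<Rightarrow> real ^ 'v \<Rightarrow> real ^ 'v \<Rightarrow> real" where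
  "hinner E f g = (\<Sum>v\<in>UNIV. real (hdeg E v) * f $ v * g $ v)"

definition RQ :: "'v::finite set set \<Rightarrow> ('v \<Rightarrow> 'v set \<Rightarrow> int) \<Rightarrow> real ^ 'v \<Rightarrow> real" where
  "RQ E \<phi> f = hinner E (hlap E \<phi> f) f / hinner E f f"

definition is_eigenfunction :: "'v::finite set set \<Rightarrow> ('v \<Rightarrow> 'v set \<Rightarrow> int) \<Rightarrow> real \<Rightarrow> real ^ 'v \<Rightarrow> bool" where
  "is_eigenfunction E \<phi> lam f \<longleftrightarrow> f \<noteq> 0 \<and> hlap E \<phi> f = lam *\<^sub>R f"

definition eigenvalues :: "'v::finite set set \<Rightarrow> ('v \<Rightarrow> 'v set \<Rightarrow> int) \<Rightarrow> real set" where
  "eigenvalues E \<phi> = {lam. \<exists>f. is_eigenfunction E \<phi> lam f}"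

definition lambda_min :: "'v::finite set set \<Rightarrow> ('v \<Rightarrow> 'v set \<Rightarrow> int) \<Rightarrow> real" where
  "lambda_min E \<phi> = Min (eigenvalues E \<phi>)"

definition lambda_max :: "'v::finite set set \<Rightarrow> ('v \<Rightarrow> 'v set \<Rightarrow> int) \<Rightarrow> real" where
  "lambda_max E \<phi> = Max (eigenvalues E \<phi>)"

text \<open>Multiplicity of an eigenvalue (L is self-adjoint, so geometric = algebraic):
  dimension of the eigenspace.\<close>
definition eig_mult :: "'v::finite set set \<Rightarrow> ('v \<Rightarrow> 'v set \<Rightarrow> int) \<Rightarrow> real \<Rightarrow> nat" where
  "eig_mult E \<phi> lam = dim {f. hlap E \<phi> f = lam *\<^sub>R f}"

definition proper_strong_coloring :: "'v set set \<Rightarrow> nat \<Rightarrow> ('v \<Rightarrow> nat) \<Rightarrow> bool" where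
  "proper_strong_coloring E k c \<longleftrightarrow>
     (\<forall>v. c v \<in> {1..k}) \<and> (\<forall>e\<in>E. \<forall>v\<in>e. \<forall>w\<in>e. v \<noteq> w \<longrightarrow> c v \<noteq> c w)"

definition chrom :: "'v set set \<Rightarrow> nat" where
  "chrom E = (LEAST k. \<exists>c. proper_strong_coloring E k c)"

definition S_h :: "'v::finite set set \<Rightarrow> ('v \<Rightarrow> 'v set \<Rightarrow> int) \<Rightarrow> ('v \<Rightarrow> nat) \<Rightarrow> real ^ 'v \<Rightarrow> nat \<Rightarrow> nat \<Rightarrow> real" where
  "S_h E \<phi> c h i j = (\<Sum>v\<in>{v. c v = i}. \<Sum>w\<in>{w. c w = j}. hadj E \<phi> v w * h $ v * h $ w)"

definition h_ij :: "('v::finite \<Rightarrow> nat) \<Rightarrow> real ^ 'v \<Rightarrow> nat \<Rightarrow> nat \<Rightarrow> real ^ 'v" where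
  "h_ij c h i j = (\<chi> v. if c v = i then h $ v else if c v = j then - h $ v else 0)"

end

(*
  Write h = h_1 + ... + h_chi with h_i the restriction of h to the colour class V_i. The adjacency
  form vanishes inside every colour class and the h_i have disjoint supports, so summing over all
  ordered pairs of colours gives
    sum ||h_i - h_j||^2 = 2 (chi - 1) ||h||^2,
    sum <L (h_i - h_j), h_i - h_j> = 2 (chi - lambda_1) ||h||^2.
  Every Rayleigh quotient is at most lambda_N, so the second sum is at most lambda_N times the
  first, and the hypothesis on chi says precisely that equality holds. Hence each h_ij = h_i - h_j
  attains the maximal Rayleigh quotient and is an eigenfunction for lambda_N; the other claims are
  read off from this. The multiplicity bounds come from the triangular family h_12, ..., h_1chi,
  extended, when m(lambda_1) > 1, by g_12 for a lambda_1-eigenfunction g vanishing at a point of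
  V_1 where h does not.
*)

theory Submission
  imports Defs
begin

section \<open>Linear algebra\<close>

lemma linear_coeff_eq_0_if_quadratic_nonpos:
  fixes a b :: real
  assumes "\<And>t. 2 * t * b + t\<^sup>2 * a \<le> 0"
  shows "b = 0"
proof (rule ccontr)
  assume "b \<noteq> 0"
  define s where "s = \<bar>a\<bar> + 1"
  have "s > 0" "2 * s + a > 0"
    unfolding s_def by auto
  \<comment> \<open>at \<open>t = b / s\<close> the linear term dominates\<close>
  have "2 * (b / s) * b + (b / s)\<^sup>2 * a = b\<^sup>2 * (2 * s + a) / s\<^sup>2"
    using \<open>s > 0\<close> by (simp add: field_simps power2_eq_square)
  also have "\<dots> > 0"
    using \<open>b \<noteq> 0\<close> \<open>s > 0\<close> \<open>2 * s + a > 0\<close> by simp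
  finally show False
    using assms[of "b / s"] by simp
qed

lemma card_le_dim_if_triangular:
  fixes F :: "'i \<Rightarrow> real ^ 'n" and p :: "'i \<Rightarrow> 'n" and r :: "'i \<Rightarrow> nat"
  assumes I: "finite I" and "F ` I \<subseteq> S"
    and pivot: "\<And>i. i \<in> I \<Longrightarrow> F i $ p i \<noteq> 0"
    and triangular: "\<And>i j. i \<in> I \<Longrightarrow> j \<in> I \<Longrightarrow> j \<noteq> i \<Longrightarrow> r i \<le> r j \<Longrightarrow> F j $ p i = 0"
  shows "card I \<le> dim S"
proof -
  have inj: "inj_on F I"
  proof (rule inj_onI, rule ccontr)
    fix i j
    assume "i \<in> I" "j \<in> I" "F i = F j" "i \<noteq> j"
    then show False
      using pivot triangular nat_le_linear[of "r i" "r j"] by metis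
  qed
  have "independent (F ` I)"
  proof
    assume "dependent (F ` I)"
    then obtain u where u: "(\<Sum>x\<in>F ` I. u x *\<^sub>R x) = 0" "\<exists>x\<in>F ` I. u x \<noteq> 0"
      using dependent_finite[of "F ` I"] I by blast
    define W where "W = {i \<in> I. u (F i) \<noteq> 0}"
    have W: "finite W" "W \<noteq> {}"
      using I u(2) unfolding W_def by auto
    have "Min (r ` W) \<in> r ` W"
      using W by (intro Min_in) auto
    then obtain i0 where i0: "i0 \<in> W" "r i0 = Min (r ` W)"
      by (auto simp: image_iff)
    have zero: "u (F i) * F i $ p i0 = 0" if "i \<in> I - {i0}" for i
    proof (cases "i \<in> W")
      case True
      then have "r i0 \<le> r i"
        using i0(2) W(1) by simp
      then show ?thesis
        using that triangular i0(1) unfolding W_def by auto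
    qed (use that W_def in auto)
    have "i0 \<in> I"
      using i0(1) unfolding W_def by simp
    then have "(\<Sum>i\<in>I. u (F i) * F i $ p i0) = u (F i0) * F i0 $ p i0"
      using I zero by (simp add: sum.remove sum.neutral)
    moreover have "(\<Sum>i\<in>I. u (F i) * F i $ p i0) = 0"
      using arg_cong[OF u(1), of "\<lambda>x. x $ p i0"]
      by (simp add: sum.reindex[OF inj] sum_component)
    ultimately show False
      using i0(1) pivot unfolding W_def by auto
  qed
  then show ?thesis
    using independent_card_le_dim[OF \<open>F ` I \<subseteq> S\<close>] card_image[OF inj] by simp
qed

lemma sum_bilinear_self_differences:
  fixes B :: "'a::real_vector \<Rightarrow> 'a \<Rightarrow> real"
  assumes B: "bilinear B" and sym: "\<And>x y. B x y = B y x"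
  shows "(\<Sum>i\<in>C. \<Sum>j\<in>C. B (p i - p j) (p i - p j))
    = 2 * real (card C) * (\<Sum>i\<in>C. B (p i) (p i)) - 2 * B (\<Sum>i\<in>C. p i) (\<Sum>i\<in>C. p i)"
proof -
  have "B (p i - p j) (p i - p j) = B (p i) (p i) + B (p j) (p j) - 2 * B (p i) (p j)" for i j
    using sym[of "p j" "p i"] by (simp add: bilinear_lsub[OF B] bilinear_rsub[OF B])
  then have "(\<Sum>i\<in>C. \<Sum>j\<in>C. B (p i - p j) (p i - p j))
      = (\<Sum>i\<in>C. \<Sum>j\<in>C. B (p i) (p i)) + (\<Sum>i\<in>C. \<Sum>j\<in>C. B (p j) (p j))
        - 2 * (\<Sum>i\<in>C. \<Sum>j\<in>C. B (p i) (p j))"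
    by (simp add: sum.distrib sum_subtractf sum_distrib_left)
  also have "(\<Sum>i\<in>C. \<Sum>j\<in>C. B (p i) (p i)) = real (card C) * (\<Sum>i\<in>C. B (p i) (p i))"
    by (simp add: sum_distrib_left)
  also have "(\<Sum>i\<in>C. \<Sum>j\<in>C. B (p j) (p j)) = real (card C) * (\<Sum>i\<in>C. B (p i) (p i))"
    by simp
  also have "(\<Sum>i\<in>C. \<Sum>j\<in>C. B (p i) (p j)) = B (\<Sum>i\<in>C. p i) (\<Sum>i\<in>C. p i)"
    by (simp add: bilinear_sum[OF B] sum.cartesian_product)
  finally show ?thesis
    by simp
qed

section \<open>The adjacency form and colour classes\<close>

lemma hadj_commute: "hadj E \<phi> v w = hadj E \<phi> w v"
proof -
  have "{e \<in> E. v \<in> e \<and> w \<in> e \<and> \<phi> v e = - \<phi> w e}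
      = {e \<in> E. w \<in> e \<and> v \<in> e \<and> \<phi> w e = - \<phi> v e}"
    "{e \<in> E. v \<in> e \<and> w \<in> e \<and> \<phi> v e = \<phi> w e}
      = {e \<in> E. w \<in> e \<and> v \<in> e \<and> \<phi> w e = \<phi> v e}"
    by auto
  then show ?thesis
    unfolding hadj_def by auto
qed

lemma hadj_self [simp]: "hadj E \<phi> v v = 0"
  unfolding hadj_def by simp

lemma hadj_eq_0_if_no_common_edge:
  assumes "\<not> (\<exists>e\<in>E. v \<in> e \<and> w \<in> e)"
  shows "hadj E \<phi> v w = 0"
proof -
  have "{e \<in> E. v \<in> e \<and> w \<in> e \<and> \<phi> v e = - \<phi> w e} = {}"
       "{e \<in> E. v \<in> e \<and> w \<in> e \<and> \<phi> v e = \<phi> w e} = {}"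
    using assms by auto
  then show ?thesis
    unfolding hadj_def by (simp del: Collect_empty_eq)
qed

lemma proper_strong_coloring_in_range:
  "proper_strong_coloring E k c \<Longrightarrow> c v \<in> {1..k}"
  unfolding proper_strong_coloring_def by blast

lemma hadj_eq_0_if_same_colour:
  assumes "proper_strong_coloring E k c" and "c v = c w"
  shows "hadj E \<phi> v w = 0"
proof (cases "v = w")
  case False
  with assms have "\<not> (\<exists>e\<in>E. v \<in> e \<and> w \<in> e)"
    unfolding proper_strong_coloring_def by blast
  then show ?thesis
    by (rule hadj_eq_0_if_no_common_edge)
qed simp

lemma two_le_colours_if_hadj_nonzero:
  assumes "proper_strong_coloring E k c" and "hadj E \<phi> v w \<noteq> 0"
  shows "2 \<le> k"
proof -
  have "c v \<noteq> c w"
    using assms hadj_eq_0_if_same_colour by metis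
  moreover have "c v \<in> {1..k}" "c w \<in> {1..k}"
    using assms(1) by (simp_all only: proper_strong_coloring_in_range)
  ultimately show ?thesis
    by auto
qed

definition adj_form ::
    "'v::finite set set \<Rightarrow> ('v \<Rightarrow> 'v set \<Rightarrow> int) \<Rightarrow> real ^ 'v \<Rightarrow> real ^ 'v \<Rightarrow> real" where
  "adj_form E \<phi> f g = (\<Sum>v\<in>UNIV. \<Sum>w\<in>UNIV. hadj E \<phi> v w * f $ v * g $ w)"

lemma bilinear_hinner: "bilinear (hinner E)"
  unfolding bilinear_def hinner_def
  by (auto intro!: linearI simp: algebra_simps sum.distrib sum_distrib_left)

lemma hinner_commute: "hinner E f g = hinner E g f"
  unfolding hinner_def by (simp add: mult_ac)

lemma bilinear_adj_form: "bilinear (adj_form E \<phi>)"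
  unfolding bilinear_def adj_form_def
  by (auto intro!: linearI simp: algebra_simps sum.distrib sum_distrib_left)

lemma adj_form_commute: "adj_form E \<phi> f g = adj_form E \<phi> g f"
  unfolding adj_form_def by (subst sum.swap) (simp add: hadj_commute mult_ac)

lemma adj_form_axis_axis: "adj_form E \<phi> (axis v 1) (axis w 1) = hadj E \<phi> v w"
  unfolding adj_form_def axis_def by (simp add: if_distrib if_distribR sum.If_cases)

lemma linear_hlap: "linear (hlap E \<phi>)"
  unfolding hlap_def
  by (auto intro!: linearI simp: vec_eq_iff algebra_simps sum.distrib sum_distrib_left
      add_divide_distrib)

lemma hinner_self_nonneg: "0 \<le> hinner E f f"
  unfolding hinner_def
  by (intro sum_nonneg) (metis mult.assoc mult_nonneg_nonneg of_nat_0_le_iff zero_le_square)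

definition colour_class_part :: "('v::finite \<Rightarrow> nat) \<Rightarrow> real ^ 'v \<Rightarrow> nat \<Rightarrow> real ^ 'v" where
  "colour_class_part c f i = (\<chi> v. if c v = i then f $ v else 0)"

lemma h_ij_eq_diff:
  "i \<noteq> j \<Longrightarrow> h_ij c f i j = colour_class_part c f i - colour_class_part c f j"
  unfolding h_ij_def colour_class_part_def by (auto simp: vec_eq_iff)

lemma sum_colour_class_part:
  assumes "finite C" and "\<And>v. c v \<in> C"
  shows "(\<Sum>i\<in>C. colour_class_part c f i) = f"
  unfolding colour_class_part_def using assms by (simp add: vec_eq_iff sum_component)

lemma hinner_colour_class_parts:
  "i \<noteq> j \<Longrightarrow> hinner E (colour_class_part c f i) (colour_class_part c f j) = 0"
  unfolding hinner_def colour_class_part_def by (intro sum.neutral) auto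

lemma sum_hinner_colour_class_part:
  assumes "finite C" and "\<And>v. c v \<in> C"
  shows "(\<Sum>i\<in>C. hinner E (colour_class_part c f i) (colour_class_part c f i)) = hinner E f f"
  unfolding hinner_def colour_class_part_def using assms
  by (subst sum.swap) (simp add: if_distrib if_distribR cong: if_cong)

lemma adj_form_colour_class_part_self:
  assumes "proper_strong_coloring E k c"
  shows "adj_form E \<phi> (colour_class_part c f i) (colour_class_part c f i) = 0"
  unfolding adj_form_def colour_class_part_def
  by (intro sum.neutral ballI) (simp add: hadj_eq_0_if_same_colour[OF assms])

lemma S_h_eq_adj_form:
  "S_h E \<phi> c f i j = adj_form E \<phi> (colour_class_part c f i) (colour_class_part c f j)"
proof -
  have "S_h E \<phi> c f i j = (\<Sum>v\<in>UNIV. if c v = i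
      then (\<Sum>w\<in>UNIV. if c w = j then hadj E \<phi> v w * f $ v * f $ w else 0) else 0)"
    unfolding S_h_def by (simp add: sum.inter_filter[symmetric])
  also have "\<dots> = adj_form E \<phi> (colour_class_part c f i) (colour_class_part c f j)"
    unfolding adj_form_def colour_class_part_def by (intro sum.cong refl) (auto intro: sum.cong)
  finally show ?thesis .
qed

lemma hinner_h_ij:
  assumes "i \<noteq> j"
  shows "hinner E (h_ij c f i j) (h_ij c f i j)
    = hinner E (colour_class_part c f i) (colour_class_part c f i)
      + hinner E (colour_class_part c f j) (colour_class_part c f j)"
  using assms hinner_commute[of E "colour_class_part c f j" "colour_class_part c f i"]
  by (simp add: h_ij_eq_diff bilinear_lsub[OF bilinear_hinner] bilinear_rsub[OF bilinear_hinner]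
      hinner_colour_class_parts)

lemma adj_form_h_ij:
  assumes "proper_strong_coloring E k c" and "i \<noteq> j"
  shows "adj_form E \<phi> (h_ij c f i j) (h_ij c f i j) = - 2 * S_h E \<phi> c f i j"
  using adj_form_colour_class_part_self[OF assms(1)]
    adj_form_commute[of E \<phi> "colour_class_part c f j" "colour_class_part c f i"]
  by (simp add: h_ij_eq_diff[OF assms(2)] S_h_eq_adj_form bilinear_lsub[OF bilinear_adj_form]
      bilinear_rsub[OF bilinear_adj_form])

lemma sum_hinner_colour_class_differences:
  assumes "proper_strong_coloring E k c"
  shows "(\<Sum>i\<in>{1..k}. \<Sum>j\<in>{1..k}. hinner E (colour_class_part c f i - colour_class_part c f j)
      (colour_class_part c f i - colour_class_part c f j)) = 2 * (real k - 1) * hinner E f f"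
proof -
  have C: "finite {1..k}" "\<And>v. c v \<in> {1..k}"
    using assms proper_strong_coloring_in_range by simp_all
  show ?thesis
    unfolding sum_bilinear_self_differences[OF bilinear_hinner hinner_commute]
      sum_hinner_colour_class_part[OF C] sum_colour_class_part[OF C]
    by (simp add: algebra_simps)
qed

section \<open>The largest eigenvalue as maximal Rayleigh quotient\<close>

locale positive_degree_hypergraph =
  fixes E :: "'v::finite set set" and \<phi> :: "'v \<Rightarrow> 'v set \<Rightarrow> int"
  assumes hdeg_ge_1: "\<forall>v. 1 \<le> hdeg E v"
begin

abbreviation L :: "real ^ 'v \<Rightarrow> real ^ 'v" where "L \<equiv> hlap E \<phi>"

lemma hdeg_pos: "0 < hdeg E v"
  using hdeg_ge_1 by (simp add: Suc_le_eq)

lemma hinner_hlap: "hinner E (L f) g = hinner E f g - adj_form E \<phi> f g"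
proof -
  have "hinner E (L f) g
      = (\<Sum>v\<in>UNIV. hdeg E v * f $ v * g $ v - (\<Sum>w\<in>UNIV. hadj E \<phi> v w * f $ w) * g $ v)"
    unfolding hinner_def hlap_def
    by (intro sum.cong) (simp_all add: field_simps hdeg_pos[THEN less_imp_neq, symmetric])
  also have "\<dots> = hinner E f g - (\<Sum>v\<in>UNIV. \<Sum>w\<in>UNIV. hadj E \<phi> v w * f $ w * g $ v)"
    unfolding hinner_def by (simp add: sum_subtractf sum_distrib_right)
  also have "(\<Sum>v\<in>UNIV. \<Sum>w\<in>UNIV. hadj E \<phi> v w * f $ w * g $ v) = adj_form E \<phi> g f"
    unfolding adj_form_def by (simp add: mult_ac)
  finally show ?thesis
    by (simp only: adj_form_commute)
qed

lemma hlap_self_adjoint: "hinner E (L f) g = hinner E f (L g)"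
  using hinner_hlap[of f g] hinner_hlap[of g f] hinner_commute adj_form_commute by metis

lemma hinner_self_pos:
  assumes "f \<noteq> 0"
  shows "0 < hinner E f f"
proof -
  obtain v where "f $ v \<noteq> 0"
    using assms by (auto simp: vec_eq_iff)
  then have "0 < f $ v * f $ v"
    by (metis not_real_square_gt_zero)
  then have "0 < hdeg E v * f $ v * f $ v"
    using hdeg_pos[of v] by (metis mult.assoc mult_pos_pos of_nat_0_less_iff)
  also have "\<dots> \<le> hinner E f f"
    unfolding hinner_def
    by (rule member_le_sum)
      (simp_all, metis mult.assoc mult_nonneg_nonneg of_nat_0_le_iff zero_le_square)
  finally show ?thesis .
qed

lemma hinner_self_eq_0_iff: "hinner E f f = 0 \<longleftrightarrow> f = 0"
  by (metis hinner_self_pos less_irrefl bilinear_lzero[OF bilinear_hinner])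

lemma eigenfunction_if_rayleigh_maximal:
  assumes max: "\<And>g. hinner E (L g) g \<le> \<mu> * hinner E g g"
    and f: "hinner E (L f) f = \<mu> * hinner E f f"
  shows "L f = \<mu> *\<^sub>R f"
proof -
  \<comment> \<open>the bound at \<open>f + t r\<close>, quadratic in \<open>t\<close>, forces the linear coefficient
    \<open>hinner E r r\<close> to vanish\<close>
  define r where "r = L f - \<mu> *\<^sub>R f"
  note hinner_simps = bilinear_ladd[OF bilinear_hinner] bilinear_radd[OF bilinear_hinner]
    bilinear_lmul[OF bilinear_hinner] bilinear_rmul[OF bilinear_hinner]
  have "2 * t * hinner E r r + t\<^sup>2 * (hinner E (L r) r - \<mu> * hinner E r r) \<le> 0" for t
  proof -
    have "hinner E (L f) r = hinner E r r + \<mu> * hinner E f r"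
      unfolding r_def
      by (simp add: bilinear_lsub[OF bilinear_hinner] bilinear_lmul[OF bilinear_hinner])
    moreover have "hinner E (L r) f = hinner E (L f) r" "hinner E r f = hinner E f r"
      using hlap_self_adjoint hinner_commute by metis+
    ultimately have "hinner E (L (f + t *\<^sub>R r)) (f + t *\<^sub>R r)
          - \<mu> * hinner E (f + t *\<^sub>R r) (f + t *\<^sub>R r)
        = 2 * t * hinner E r r + t\<^sup>2 * (hinner E (L r) r - \<mu> * hinner E r r)"
      using f by (simp add: linear_add[OF linear_hlap] linear_scale[OF linear_hlap] hinner_simps
          algebra_simps power2_eq_square)
    then show ?thesis
      using max[of "f + t *\<^sub>R r"] by simp
  qed
  then have "hinner E r r = 0"
    by (rule linear_coeff_eq_0_if_quadratic_nonpos)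
  then show ?thesis
    unfolding r_def hinner_self_eq_0_iff by simp
qed

lemma hinner_eigenfunctions_orthogonal:
  assumes "L f = l *\<^sub>R f" "L g = m *\<^sub>R g" "l \<noteq> m"
  shows "hinner E f g = 0"
proof -
  have "l * hinner E f g = m * hinner E f g"
    using hlap_self_adjoint[of f g] assms(1,2)
    by (simp add: bilinear_lmul[OF bilinear_hinner] bilinear_rmul[OF bilinear_hinner])
  then show ?thesis
    using assms(3) by simp
qed

lemma independent_if_hinner_orthogonal:
  assumes "0 \<notin> S"
    and orth: "\<And>f g. f \<in> S \<Longrightarrow> g \<in> S \<Longrightarrow> f \<noteq> g \<Longrightarrow> hinner E f g = 0"
  shows "independent S"
  unfolding independent_explicit_finite_subsets
proof (intro allI impI ballI)
  fix T u f
  assume T: "T \<subseteq> S" "finite T" and f: "f \<in> T"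
    and sum_eq_0: "(\<Sum>g\<in>T. u g *\<^sub>R g) = 0"
  have lin: "linear (\<lambda>g. hinner E g f)"
    using bilinear_hinner unfolding bilinear_def by blast
  have "0 = hinner E (\<Sum>g\<in>T. u g *\<^sub>R g) f"
    unfolding sum_eq_0 bilinear_lzero[OF bilinear_hinner] ..
  also have "\<dots> = (\<Sum>g\<in>T. u g * hinner E g f)"
    by (simp add: linear_sum[OF lin] linear_scale[OF lin])
  also have "\<dots> = (\<Sum>g\<in>T. if g = f then u f * hinner E f f else 0)"
    using T f orth by (intro sum.cong) (auto simp: subset_iff)
  also have "\<dots> = u f * hinner E f f"
    using T f by simp
  moreover have "f \<noteq> 0"
    using f T \<open>0 \<notin> S\<close> by auto
  ultimately show "u f = 0"
    using hinner_self_pos[of f] by simp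
qed

lemma finite_eigenvalues: "finite (eigenvalues E \<phi>)"
proof -
  define ef where "ef l = (SOME f. is_eigenfunction E \<phi> l f)" for l
  have ef: "L (ef l) = l *\<^sub>R ef l" "ef l \<noteq> 0" if "l \<in> eigenvalues E \<phi>" for l
    using someI_ex[of "is_eigenfunction E \<phi> l"] that
    unfolding ef_def eigenvalues_def is_eigenfunction_def by auto
  have inj: "inj_on ef (eigenvalues E \<phi>)"
    by (rule inj_onI) (metis ef scaleR_cancel_right)
  have "independent (ef ` eigenvalues E \<phi>)"
  proof (rule independent_if_hinner_orthogonal)
    show "0 \<notin> ef ` eigenvalues E \<phi>"
      using ef(2) by auto
    fix f g
    assume "f \<in> ef ` eigenvalues E \<phi>" "g \<in> ef ` eigenvalues E \<phi>" "f \<noteq> g"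
    then obtain l m
      where "l \<in> eigenvalues E \<phi>" "m \<in> eigenvalues E \<phi>" "f = ef l" "g = ef m" "l \<noteq> m"
      by blast
    then show "hinner E f g = 0"
      using hinner_eigenfunctions_orthogonal ef(1) by metis
  qed
  then have "finite (ef ` eigenvalues E \<phi>)"
    using independent_bound by blast
  then show ?thesis
    using finite_image_iff[OF inj] by simp
qed

lemma hinner_scaleR_self: "hinner E (t *\<^sub>R g) (t *\<^sub>R g) = t\<^sup>2 * hinner E g g"
  by (simp add: bilinear_lmul[OF bilinear_hinner] bilinear_rmul[OF bilinear_hinner]
      power2_eq_square)

lemma hinner_hlap_scaleR_self: "hinner E (L (t *\<^sub>R g)) (t *\<^sub>R g) = t\<^sup>2 * hinner E (L g) g"
  by (simp add: linear_scale[OF linear_hlap] bilinear_lmul[OF bilinear_hinner]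
      bilinear_rmul[OF bilinear_hinner] power2_eq_square)

lemma rayleigh_quotient_attains_max:
  "\<exists>\<mu> f. f \<noteq> 0 \<and> hinner E (L f) f = \<mu> * hinner E f f
     \<and> (\<forall>g. hinner E (L g) g \<le> \<mu> * hinner E g g)"
proof -
  define R where "R g = hinner E (L g) g / hinner E g g" for g
  have "continuous_on (sphere 0 1) (\<lambda>g. hinner E g g - adj_form E \<phi> g g)"
    unfolding hinner_def adj_form_def by (intro continuous_intros)
  then have "continuous_on (sphere 0 1) (\<lambda>g. hinner E (L g) g)"
    by (simp add: hinner_hlap)
  moreover have "continuous_on (sphere 0 1) (\<lambda>g. hinner E g g)"
    unfolding hinner_def by (intro continuous_intros)
  moreover have "hinner E g g \<noteq> 0" if "g \<in> sphere 0 1" for g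
  proof -
    have "g \<noteq> 0"
      using that by auto
    then show ?thesis
      using hinner_self_pos[of g] by simp
  qed
  ultimately have "continuous_on (sphere 0 1) R"
    unfolding R_def by (intro continuous_on_divide) auto
  then obtain f where f: "f \<in> sphere 0 1" and max: "\<And>g. g \<in> sphere 0 1 \<Longrightarrow> R g \<le> R f"
    using continuous_attains_sup[OF compact_sphere, of 0 1 R] by auto
  have "hinner E (L g) g \<le> R f * hinner E g g" for g
  proof (cases "g = 0")
    case False
    define t where "t = 1 / norm g"
    have "t \<noteq> 0" "t *\<^sub>R g \<in> sphere 0 1"
      using False by (simp_all add: t_def)
    then have "R g \<le> R f"
      using max[of "t *\<^sub>R g"] unfolding R_def hinner_scaleR_self hinner_hlap_scaleR_self by simp
    then show ?thesis
      using hinner_self_pos[OF False] unfolding R_def by (simp add: divide_le_eq)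
  qed (simp add: linear_0[OF linear_hlap] bilinear_lzero[OF bilinear_hinner])
  moreover have "f \<noteq> 0"
    using f by auto
  moreover have "hinner E (L f) f = R f * hinner E f f"
    using hinner_self_pos[OF \<open>f \<noteq> 0\<close>] unfolding R_def by simp
  ultimately show ?thesis
    by blast
qed

lemma rayleigh_le_lambda_max: "hinner E (L g) g \<le> lambda_max E \<phi> * hinner E g g"
proof -
  obtain \<mu> f where f: "f \<noteq> 0" "hinner E (L f) f = \<mu> * hinner E f f"
    and max: "\<And>g. hinner E (L g) g \<le> \<mu> * hinner E g g"
    using rayleigh_quotient_attains_max by blast
  have "\<mu> \<in> eigenvalues E \<phi>"
    using eigenfunction_if_rayleigh_maximal[OF max f(2)] f(1)
    unfolding eigenvalues_def is_eigenfunction_def by blast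
  moreover have "l \<le> \<mu>" if l: "l \<in> eigenvalues E \<phi>" for l
  proof -
    obtain h where h: "h \<noteq> 0" "L h = l *\<^sub>R h"
      using l unfolding eigenvalues_def is_eigenfunction_def by auto
    then have "l * hinner E h h \<le> \<mu> * hinner E h h"
      using max[of h] by (simp add: bilinear_lmul[OF bilinear_hinner])
    then show ?thesis
      using hinner_self_pos[OF h(1)] by simp
  qed
  ultimately have "lambda_max E \<phi> = \<mu>"
    unfolding lambda_max_def using finite_eigenvalues by (intro Max_eqI) auto
  then show ?thesis
    using max by simp
qed

lemma lambda_max_gt_1:
  assumes "hadj E \<phi> v w \<noteq> 0"
  shows "1 < lambda_max E \<phi>"
proof -
  define g :: "real ^ 'v" where "g = axis v 1 - hadj E \<phi> v w *\<^sub>R axis w 1"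
  have "v \<noteq> w"
    using assms by auto
  then have "g $ v = 1"
    unfolding g_def axis_def by simp
  then have "g \<noteq> 0"
    by auto
  have "adj_form E \<phi> g g = - 2 * (hadj E \<phi> v w)\<^sup>2"
    unfolding g_def
    by (simp add: bilinear_lsub[OF bilinear_adj_form] bilinear_rsub[OF bilinear_adj_form]
        bilinear_lmul[OF bilinear_adj_form] bilinear_rmul[OF bilinear_adj_form]
        adj_form_axis_axis hadj_commute[of E \<phi> w v] power2_eq_square)
  then have "1 * hinner E g g < hinner E (L g) g"
    using assms by (simp add: hinner_hlap)
  also have "\<dots> \<le> lambda_max E \<phi> * hinner E g g"
    by (rule rayleigh_le_lambda_max)
  finally show ?thesis
    using hinner_self_pos[OF \<open>g \<noteq> 0\<close>] by (simp add: mult_less_cancel_right)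
qed


lemma sum_rayleigh_colour_class_differences:
  assumes col: "proper_strong_coloring E k c" and f: "L f = l *\<^sub>R f"
  shows "(\<Sum>i\<in>{1..k}. \<Sum>j\<in>{1..k}. hinner E (L (colour_class_part c f i - colour_class_part c f j))
      (colour_class_part c f i - colour_class_part c f j)) = 2 * (real k - l) * hinner E f f"
proof -
  let ?d = "\<lambda>i j. colour_class_part c f i - colour_class_part c f j"
  have C: "finite {1..k}" "\<And>v. c v \<in> {1..k}"
    using col proper_strong_coloring_in_range by simp_all
  have adj: "(\<Sum>i\<in>{1..k}. \<Sum>j\<in>{1..k}. adj_form E \<phi> (?d i j) (?d i j))
      = - 2 * ((1 - l) * hinner E f f)"
    unfolding sum_bilinear_self_differences[OF bilinear_adj_form adj_form_commute]
      adj_form_colour_class_part_self[OF col] sum_colour_class_part[OF C]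
    using f hinner_hlap[of f f] by (simp add: bilinear_lmul[OF bilinear_hinner] algebra_simps)
  have "(\<Sum>i\<in>{1..k}. \<Sum>j\<in>{1..k}. hinner E (L (?d i j)) (?d i j))
      = (\<Sum>i\<in>{1..k}. \<Sum>j\<in>{1..k}. hinner E (?d i j) (?d i j))
        - (\<Sum>i\<in>{1..k}. \<Sum>j\<in>{1..k}. adj_form E \<phi> (?d i j) (?d i j))"
    unfolding hinner_hlap by (simp only: sum_subtractf)
  then show ?thesis
    unfolding sum_hinner_colour_class_differences[OF col] adj by (simp add: algebra_simps)
qed
end

section \<open>Colourings attaining the spectral bound\<close>

lemma ex_eigenfunction_vanishing_at:
  assumes f: "is_eigenfunction E \<phi> l f" and mult: "1 < eig_mult E \<phi> l"
  shows "\<exists>g. is_eigenfunction E \<phi> l g \<and> g $ v = 0"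
proof (cases "f $ v = 0")
  case False
  obtain g where g: "hlap E \<phi> g = l *\<^sub>R g" "g \<notin> span {f}"
  proof -
    have "\<not> {h. hlap E \<phi> h = l *\<^sub>R h} \<subseteq> span {f}"
    proof
      assume "{h. hlap E \<phi> h = l *\<^sub>R h} \<subseteq> span {f}"
      then have "eig_mult E \<phi> l \<le> card {f}"
        unfolding eig_mult_def by (rule dim_le_card) simp
      with mult show False
        by simp
    qed
    then show ?thesis
      using that by blast
  qed
  define g' where "g' = g - (g $ v / f $ v) *\<^sub>R f"
  have "hlap E \<phi> g' = l *\<^sub>R g'"
    using f g(1) unfolding g'_def is_eigenfunction_def
    by (simp add: linear_diff[OF linear_hlap] linear_scale[OF linear_hlap] algebra_simps)
  moreover have "g' \<noteq> 0"
  proof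
    assume "g' = 0"
    then have "g = (g $ v / f $ v) *\<^sub>R f"
      unfolding g'_def by simp
    then have "g \<in> span {f}"
      by (metis span_base span_scale singletonI)
    with g(2) show False ..
  qed
  moreover have "g' $ v = 0"
    using False unfolding g'_def by simp
  ultimately show ?thesis
    unfolding is_eigenfunction_def by blast
qed (use f in blast)

(* colouring_bound_eq is chi = (lambda_N - lambda_1) / (lambda_N - 1) with the denominator cleared;
   l1 need not be the least eigenvalue, only an eigenvalue satisfying this equation. *)
locale extremal_colouring = positive_degree_hypergraph E \<phi>
    for E :: "'v::finite set set" and \<phi> :: "'v \<Rightarrow> 'v set \<Rightarrow> int" +
  fixes k :: nat and c :: "'v \<Rightarrow> nat" and l1 :: real
  assumes adj_nonzero: "\<exists>v w. hadj E \<phi> v w \<noteq> 0"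
    and colouring: "proper_strong_coloring E k c"
    and colouring_bound_eq: "real k * (lambda_max E \<phi> - 1) = lambda_max E \<phi> - l1"
begin

lemma one_less_lambda_max: "1 < lambda_max E \<phi>"
  using adj_nonzero lambda_max_gt_1 by blast

lemma two_le_k: "2 \<le> k"
  using adj_nonzero colouring two_le_colours_if_hadj_nonzero by metis

lemma lambda_max_eq: "lambda_max E \<phi> = (real k - l1) / (real k - 1)"
  using colouring_bound_eq two_le_k by (simp add: field_simps)

lemma colours_in_range: "c v \<in> {1..k}"
  using colouring by (rule proper_strong_coloring_in_range)

lemma rayleigh_colour_class_difference:
  assumes f: "is_eigenfunction E \<phi> l1 f" and "i \<in> {1..k}" "j \<in> {1..k}"
  defines "g \<equiv> colour_class_part c f i - colour_class_part c f j"
  shows "hinner E (L g) g = lambda_max E \<phi> * hinner E g g"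
proof -
  let ?C = "{1..k}" and ?lmax = "lambda_max E \<phi>"
  have f_eig: "L f = l1 *\<^sub>R f"
    using f unfolding is_eigenfunction_def by simp
  \<comment> \<open>the slacks are nonnegative and, by \<open>colouring_bound_eq\<close>, sum to zero over all pairs\<close>
  define d where "d i j = colour_class_part c f i - colour_class_part c f j" for i j
  define slack where "slack i j = ?lmax * hinner E (d i j) (d i j) - hinner E (L (d i j)) (d i j)"
    for i j
  have slack_nonneg: "0 \<le> slack i j" for i j
    using rayleigh_le_lambda_max unfolding slack_def by simp
  have "(\<Sum>i\<in>?C. \<Sum>j\<in>?C. slack i j)
      = ?lmax * (\<Sum>i\<in>?C. \<Sum>j\<in>?C. hinner E (d i j) (d i j))
        - (\<Sum>i\<in>?C. \<Sum>j\<in>?C. hinner E (L (d i j)) (d i j))"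
    unfolding slack_def by (simp only: sum_subtractf sum_distrib_left)
  also have "\<dots> = 2 * hinner E f f * ((real k - 1) * ?lmax - (real k - l1))"
    unfolding d_def sum_hinner_colour_class_differences[OF colouring]
      sum_rayleigh_colour_class_differences[OF colouring f_eig]
    by (simp add: algebra_simps)
  also have "(real k - 1) * ?lmax - (real k - l1) = 0"
    using colouring_bound_eq by (simp add: algebra_simps)
  finally have "(\<Sum>(i, j)\<in>?C \<times> ?C. slack i j) = 0"
    by (simp add: sum.cartesian_product)
  then have "slack i j = 0"
    using assms(2,3) slack_nonneg by (subst (asm) sum_nonneg_eq_0_iff) auto
  then show ?thesis
    unfolding slack_def g_def d_def by simp
qed

lemma colour_classes_meet_support:
  assumes f: "is_eigenfunction E \<phi> l1 f" and i: "i \<in> {1..k}"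
  shows "\<exists>v. c v = i \<and> f $ v \<noteq> 0"
proof (rule ccontr)
  assume "\<not> ?thesis"
  then have part_i: "colour_class_part c f i = 0"
    by (auto simp: colour_class_part_def vec_eq_iff)
  have "colour_class_part c f j = 0" if j: "j \<in> {1..k}" for j
  proof -
    let ?g = "colour_class_part c f j"
    have "hinner E (L ?g) ?g = lambda_max E \<phi> * hinner E ?g ?g"
      using rayleigh_colour_class_difference[OF f j i] part_i by simp
    moreover have "hinner E (L ?g) ?g = hinner E ?g ?g"
      by (simp add: hinner_hlap adj_form_colour_class_part_self[OF colouring])
    ultimately have "(lambda_max E \<phi> - 1) * hinner E ?g ?g = 0"
      by (simp add: algebra_simps)
    then show ?thesis
      using one_less_lambda_max hinner_self_eq_0_iff by simp
  qed
  then have "f = 0"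
    using sum_colour_class_part[of "{1..k}" c f] colours_in_range by simp
  with f show False
    unfolding is_eigenfunction_def by simp
qed

lemma rayleigh_h_ij:
  assumes f: "is_eigenfunction E \<phi> l1 f" and "i \<in> {1..k}" "j \<in> {1..k}" "i \<noteq> j"
  shows "hinner E (L (h_ij c f i j)) (h_ij c f i j)
    = lambda_max E \<phi> * hinner E (h_ij c f i j) (h_ij c f i j)"
  unfolding h_ij_eq_diff[OF assms(4)] by (rule rayleigh_colour_class_difference[OF f assms(2,3)])

lemma S_h_nonneg:
  assumes "is_eigenfunction E \<phi> l1 f" and "i \<in> {1..k}" "j \<in> {1..k}" "i \<noteq> j"
  shows "0 \<le> S_h E \<phi> c f i j"
proof -
  let ?N = "\<lambda>i. hinner E (colour_class_part c f i) (colour_class_part c f i)"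
  have "2 * S_h E \<phi> c f i j = (lambda_max E \<phi> - 1) * (?N i + ?N j)"
    using rayleigh_h_ij[OF assms]
    unfolding hinner_hlap adj_form_h_ij[OF colouring assms(4)] hinner_h_ij[OF assms(4)]
    by (simp add: algebra_simps)
  moreover have "0 \<le> (lambda_max E \<phi> - 1) * (?N i + ?N j)"
    using one_less_lambda_max by (simp add: hinner_self_nonneg)
  ultimately show ?thesis
    by simp
qed

lemma h_ij_nonzero:
  assumes "is_eigenfunction E \<phi> l1 f" and "i \<in> {1..k}"
  shows "h_ij c f i j \<noteq> 0"
proof -
  obtain v where "c v = i" "f $ v \<noteq> 0"
    using colour_classes_meet_support[OF assms] by blast
  then have "h_ij c f i j $ v \<noteq> 0"
    unfolding h_ij_def by simp
  then show ?thesis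
    by auto
qed

lemma is_eigenfunction_h_ij:
  assumes f: "is_eigenfunction E \<phi> l1 f" and "i \<in> {1..k}" "j \<in> {1..k}" "i \<noteq> j"
  shows "is_eigenfunction E \<phi> (lambda_max E \<phi>) (h_ij c f i j)"
  unfolding is_eigenfunction_def
  using eigenfunction_if_rayleigh_maximal[OF rayleigh_le_lambda_max rayleigh_h_ij[OF assms]]
    h_ij_nonzero[OF f assms(2), where j = j]
  by simp

lemma RQ_h_ij:
  assumes f: "is_eigenfunction E \<phi> l1 f" and "i \<in> {1..k}" "j \<in> {1..k}" "i \<noteq> j"
  shows "RQ E \<phi> (h_ij c f i j) = lambda_max E \<phi>"
  using rayleigh_h_ij[OF assms] hinner_self_pos[OF h_ij_nonzero[OF f assms(2), where j = j]]
  unfolding RQ_def by simp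

lemma eig_mult_lambda_max_ge:
  assumes f: "is_eigenfunction E \<phi> l1 f"
  shows "k - 1 \<le> eig_mult E \<phi> (lambda_max E \<phi>)"
proof -
  obtain p where p: "\<And>i. i \<in> {1..k} \<Longrightarrow> c (p i) = i \<and> f $ p i \<noteq> 0"
    using colour_classes_meet_support[OF f] by metis
  have "card {2..k} \<le> eig_mult E \<phi> (lambda_max E \<phi>)"
    unfolding eig_mult_def
  proof (rule card_le_dim_if_triangular[where F = "\<lambda>j. h_ij c f 1 j" and p = p and r = "\<lambda>_. 0"])
    show "(\<lambda>j. h_ij c f 1 j) ` {2..k} \<subseteq> {g. L g = lambda_max E \<phi> *\<^sub>R g}"
      using is_eigenfunction_h_ij[OF f] two_le_k unfolding is_eigenfunction_def by auto
  qed (use p in \<open>auto simp: h_ij_def\<close>)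
  then show ?thesis
    by simp
qed

lemma eig_mult_lambda_max_gt:
  assumes f: "is_eigenfunction E \<phi> l1 f" and mult: "1 < eig_mult E \<phi> l1"
  shows "k - 1 < eig_mult E \<phi> (lambda_max E \<phi>)"
proof -
  have classes: "1 \<in> {1..k}" "2 \<in> {1..k}"
    using two_le_k by auto
  obtain p where p: "\<And>i. i \<in> {1..k} \<Longrightarrow> c (p i) = i \<and> f $ p i \<noteq> 0"
    using colour_classes_meet_support[OF f] by metis
  obtain g where g: "is_eigenfunction E \<phi> l1 g" "g $ p 1 = 0"
    using ex_eigenfunction_vanishing_at[OF f mult] by blast
  obtain q where q: "c q = 2" "g $ q \<noteq> 0"
    using colour_classes_meet_support[OF g(1) classes(2)] by blast
  \<comment> \<open>\<open>F 1, F 2, ..., F k\<close> is triangular for the pivots \<open>q, p 1, p 3, ..., p k\<close>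
    because \<open>g\<close> vanishes at \<open>p 1\<close>\<close>
  define F where "F j = (if j = 1 then h_ij c g 1 2 else h_ij c f 1 j)" for j
  define pivot where "pivot j = (if j = 1 then q else if j = 2 then p 1 else p j)" for j
  define rank :: "nat \<Rightarrow> nat"
    where "rank j = (if j = 1 then 2 else if j = 2 then 1 else 0)" for j
  have "card {1..k} \<le> eig_mult E \<phi> (lambda_max E \<phi>)"
    unfolding eig_mult_def
  proof (rule card_le_dim_if_triangular[where F = F and p = pivot and r = rank])
    show "F ` {1..k} \<subseteq> {g. L g = lambda_max E \<phi> *\<^sub>R g}"
      using is_eigenfunction_h_ij[OF g(1) classes] is_eigenfunction_h_ij[OF f classes(1)]
      unfolding F_def is_eigenfunction_def by auto
    show "F i $ pivot i \<noteq> 0" if "i \<in> {1..k}" for i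
      using that p q by (auto simp: F_def pivot_def h_ij_def)
    show "F j $ pivot i = 0"
      if "i \<in> {1..k}" "j \<in> {1..k}" "j \<noteq> i" "rank i \<le> rank j" for i j
      using that p q g(2)
      by (auto simp: F_def pivot_def rank_def h_ij_def split: if_splits)
  qed simp
  then show ?thesis
    using two_le_k by simp
qed

end

theorem mainTheorem3:
  fixes E :: "'v::finite set set" and \<phi> :: "'v \<Rightarrow> 'v set \<Rightarrow> int"
    and h :: "real ^ 'v" and c :: "'v \<Rightarrow> nat"
  assumes hyp: "oriented_hypergraph E \<phi>"
    and deg: "\<forall>v. hdeg E v \<ge> 1"
    and Anz: "\<exists>v w. hadj E \<phi> v w \<noteq> 0"
    and chi: "real (chrom E) = (lambda_max E \<phi> - lambda_min E \<phi>) / (lambda_max E \<phi> - 1)"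
    and h: "is_eigenfunction E \<phi> (lambda_min E \<phi>) h"
    and col: "proper_strong_coloring E (chrom E) c"
  shows "(\<forall>i\<in>{1..chrom E}. \<exists>v. c v = i \<and> h $ v \<noteq> 0)
    \<and> (\<forall>i j. 1 \<le> i \<and> i < j \<and> j \<le> chrom E \<longrightarrow> S_h E \<phi> c h i j \<ge> 0)
    \<and> (\<forall>i j. 1 \<le> i \<and> i < j \<and> j \<le> chrom E \<longrightarrow>
          RQ E \<phi> (h_ij c h i j) = lambda_max E \<phi>
        \<and> lambda_max E \<phi> = (real (chrom E) - lambda_min E \<phi>) / (real (chrom E) - 1)
        \<and> is_eigenfunction E \<phi> (lambda_max E \<phi>) (h_ij c h i j))
    \<and> eig_mult E \<phi> (lambda_max E \<phi>) \<ge> chrom E - 1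
    \<and> (eig_mult E \<phi> (lambda_min E \<phi>) > 1 \<longrightarrow> eig_mult E \<phi> (lambda_max E \<phi>) > chrom E - 1)"
proof -
  interpret positive_degree_hypergraph E \<phi>
    using deg by unfold_locales
  obtain v w where "hadj E \<phi> v w \<noteq> 0"
    using Anz by blast
  then have "1 < lambda_max E \<phi>"
    by (rule lambda_max_gt_1)
  then have "real (chrom E) * (lambda_max E \<phi> - 1) = lambda_max E \<phi> - lambda_min E \<phi>"
    using chi by (simp add: field_simps)
  then interpret extremal_colouring E \<phi> "chrom E" c "lambda_min E \<phi>"
    using Anz col by unfold_locales
  show ?thesis
    using colour_classes_meet_support[OF h] S_h_nonneg[OF h] RQ_h_ij[OF h] lambda_max_eq
      is_eigenfunction_h_ij[OF h] eig_mult_lambda_max_ge[OF h] eig_mult_lambda_max_gt[OF h]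
    by auto
qed

end
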